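(* Let $s=1$, $n=3$, and $p_{ij}=1/6$ for all $i\neq j$. Let $\beta(x)=(1+x)^{-1}$ or $\beta(x)=e^{-x}$. Let $Y(t)$ be the solution of the gradient flow of relative entropy with initial data $y_1(0)=1$, $y_2(0)=0$, $y_3(0)=-1$. Then $Y(t)$ has the form $y_1(t)=X(t)$, $y_2(t)=0$, $y_3(t)=-X(t)$ with $0\le X(t)\le 1$, and there is a constant $C$ such that $\operatorname{diam}Y(t)\le C\,t^{-1/2}$ for all $t>0$; in particular $\operatorname{diam}Y(t)\to0$ as $t\to\infty$.
   Context: Let $\mathcal{P}_n=\{(i,j): i\neq j\}$ and $(p_{ij})$ a symmetric probability distribution on $\mathcal{P}_n$. For $Y=(y_1,\dots,y_n)\in(\mathbb{R}^s)^n$ define $q_{ij}=\beta(|y_i-y_j|^2)/\sum_{k\neq \ell}\beta(|y_k-y_\ell|^2)$. The gradient flow of relative entropy is the ODE system $$\frac{dy_i}{dt}=4\sum_{j\neq i}(p_{ij}-q_{ij})(y_i-y_j)(\log\beta)'(|y_i-y_j|^2),\qquad i=1,\dots,n.$$ $\operatorname{diam}Y=\max_{i,j}|y_i-y_j|$. *)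

theory Defs
  imports "HOL-Analysis.Analysis"
begin

text \<open>Configurations in dimension s = 1: Y = (y_1,...,y_n) is represented as a
  function nat => real, only indices 1..n are relevant.\<close>

definition qsim :: "nat \<Rightarrow> (real \<Rightarrow> real) \<Rightarrow> (nat \<Rightarrow> real) \<Rightarrow> nat \<Rightarrow> nat \<Rightarrow> real" where
  "qsim n \<beta> y i j =
     \<beta> ((y i - y j)\<^sup>2) /
     (\<Sum>k\<in>{1..n}. \<Sum>l\<in>{1..n} - {k}. \<beta> ((y k - y l)\<^sup>2))"

definition flow_rhs :: "nat \<Rightarrow> (nat \<Rightarrow> nat \<Rightarrow> real) \<Rightarrow> (real \<Rightarrow> real) \<Rightarrow> (nat \<Rightarrow> real) \<Rightarrow> nat \<Rightarrow> real" where
  "flow_rhs n p \<beta> y i =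
     4 * (\<Sum>j\<in>{1..n} - {i}. (p i j - qsim n \<beta> y i j) * (y i - y j)
            * deriv (\<lambda>x. ln (\<beta> x)) (\<bar>y i - y j\<bar>\<^sup>2))"

definition is_flow_solution :: "nat \<Rightarrow> (nat \<Rightarrow> nat \<Rightarrow> real) \<Rightarrow> (real \<Rightarrow> real) \<Rightarrow> (real \<Rightarrow> nat \<Rightarrow> real) \<Rightarrow> bool" where
  "is_flow_solution n p \<beta> Y \<longleftrightarrow>
     (\<forall>t\<ge>0. \<forall>i\<in>{1..n}.
        ((\<lambda>\<tau>. Y \<tau> i) has_real_derivative flow_rhs n p \<beta> (Y t) i) (at t within {0..}))"

definition diam :: "nat \<Rightarrow> (nat \<Rightarrow> real) \<Rightarrow> real" where
  "diam n y = Max {\<bar>y i - y j\<bar> | i j. i \<in> {1..n} \<and> j \<in> {1..n}}"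

end

theory Submission
  imports Defs
begin

text \<open>The centre of mass of the three particles is conserved, and once \<open>y\<^sub>1 + y\<^sub>2 + y\<^sub>3 = 0\<close>
  the velocity of the middle particle is bounded by a constant times \<open>|y\<^sub>2|\<close> (both \<open>x \<mapsto> x \<psi>(x\<^sup>2)\<close>
  and \<open>x \<mapsto> x \<beta>(x\<^sup>2) \<psi>(x\<^sup>2)\<close> are Lipschitz, \<open>\<psi> = (log \<beta>)'\<close>); Gronwall's inequality then forces
  \<open>y\<^sub>2 = 0\<close> and \<open>y\<^sub>3 = -y\<^sub>1\<close> for all time. The flow reduces to a scalar equation \<open>X' = - F X\<close> with
  \<open>x F x \<ge> 0\<close> and \<open>F x \<ge> c x\<^sup>3\<close> on \<open>[0, 1]\<close>, along which \<open>1 / X\<^sup>2 - 2 c t\<close> increases; hence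
  \<open>diam Y = 2 X \<le> 2 / \<surd>(2 c t)\<close>. A symmetric solution exists by separation of variables.\<close>

section \<open>Differential inequalities on the half-line\<close>

lemma continuous_on_atLeast_if_DERIV_within:
  fixes f f' :: "real \<Rightarrow> real"
  assumes "\<And>t. 0 \<le> t \<Longrightarrow> (f has_real_derivative f' t) (at t within {0..})"
  shows "continuous_on {0..} f"
  unfolding continuous_on_eq_continuous_within
  using DERIV_continuous[OF assms] by simp

lemma DERIV_within_nonpos_imp_nonincreasing:
  fixes f f' :: "real \<Rightarrow> real"
  assumes "0 \<le> a" "a \<le> b"
    and deriv: "\<And>t. t \<in> {a..b} \<Longrightarrow> (f has_real_derivative f' t) (at t within {0..})"
    and nonpos: "\<And>t. t \<in> {a..b} \<Longrightarrow> f' t \<le> 0"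
  shows "f b \<le> f a"
proof (rule DERIV_nonpos_imp_decreasing_open[OF \<open>a \<le> b\<close>])
  fix x assume x: "a < x" "x < b"
  have "at x within {0..} = at x"
    by (rule at_within_interior) (use x \<open>0 \<le> a\<close> in auto)
  then show "\<exists>y. DERIV f x :> y \<and> y \<le> 0"
    using deriv[of x] nonpos[of x] x by auto
next
  have "continuous (at x within {a..b}) f" if "x \<in> {a..b}" for x
    using DERIV_continuous[OF deriv[OF that]] continuous_within_subset[of x "{0..}" f "{a..b}"]
      that \<open>0 \<le> a\<close> by auto
  then show "continuous_on {a..b} f"
    unfolding continuous_on_eq_continuous_within by blast
qed

lemma zero_if_DERIV_within_bounded_by_self:
  fixes f f' :: "real \<Rightarrow> real"
  assumes "0 \<le> T" "f 0 = 0"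
    and deriv: "\<And>t. t \<in> {0..T} \<Longrightarrow> (f has_real_derivative f' t) (at t within {0..})"
    and bound: "\<And>t. t \<in> {0..T} \<Longrightarrow> \<bar>f' t\<bar> \<le> K * \<bar>f t\<bar>"
  shows "f T = 0"
proof -
  define g where "g t = (f t)\<^sup>2 * exp (- 2 * K * t)" for t
  have "g T \<le> g 0"
  proof (rule DERIV_within_nonpos_imp_nonincreasing[OF order.refl \<open>0 \<le> T\<close>])
    fix t assume t: "t \<in> {0..T}"
    show "(g has_real_derivative 2 * (f t * f' t - K * (f t)\<^sup>2) * exp (- 2 * K * t))
        (at t within {0..})"
      unfolding g_def using deriv[OF t]
      by (auto intro!: derivative_eq_intros simp: algebra_simps power2_eq_square)
    have "f t * f' t \<le> \<bar>f t\<bar> * (K * \<bar>f t\<bar>)"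
      using mult_left_mono[OF bound[OF t] abs_ge_zero[of "f t"]] abs_ge_self[of "f t * f' t"]
      by (simp add: abs_mult)
    also have "\<dots> = K * (f t)\<^sup>2"
      by (simp add: power2_eq_square abs_mult_self_eq algebra_simps flip: abs_mult)
    finally show "2 * (f t * f' t - K * (f t)\<^sup>2) * exp (- 2 * K * t) \<le> 0"
      by (simp add: mult_le_0_iff)
  qed
  then show ?thesis
    unfolding g_def using \<open>f 0 = 0\<close> by (simp add: mult_le_0_iff)
qed

lemma lipschitz_if_DERIV_bounded:
  fixes f f' :: "real \<Rightarrow> real"
  assumes "\<And>x. (f has_real_derivative f' x) (at x)" "\<And>x. \<bar>f' x\<bar> \<le> B"
  shows "\<bar>f x - f y\<bar> \<le> B * \<bar>x - y\<bar>"
  using field_differentiable_bound[of UNIV f f' B x y] assms by simp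

lemma DERIV_ge_pos_imp_inverse:
  fixes T k :: "real \<Rightarrow> real"
  assumes deriv: "\<And>s. (T has_real_derivative k s) (at s)"
    and lower: "\<And>s. m \<le> k s" and "0 < m"
  obtains S where "\<And>t. T (S t) = t" "\<And>s. S (T s) = s" "mono S"
    "\<And>t. (S has_real_derivative inverse (k (S t))) (at t)"
proof -
  have cont: "isCont T s" for s
    using deriv DERIV_isCont by blast
  have strict: "T a < T b" if "a < b" for a b
    using DERIV_pos_imp_increasing[OF that] deriv lower \<open>0 < m\<close> by (meson less_le_trans)
  have inj: "T a = T b \<Longrightarrow> a = b" for a b
    using strict[of a b] strict[of b a] by (cases a b rule: linorder_cases) auto
  have linear_lower: "T a + m * (b - a) \<le> T b" if "a \<le> b" for a b
  proof -
    have "(\<lambda>x. T x - m * x) a \<le> (\<lambda>x. T x - m * x) b"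
      by (rule DERIV_nonneg_imp_nondecreasing[OF that])
        (auto intro!: exI[of _ "k _ - m"] derivative_eq_intros deriv simp: lower)
    then show ?thesis by (simp add: algebra_simps)
  qed
  have surj: "\<exists>s. T s = t" for t
  proof -
    define r where "r = \<bar>t - T 0\<bar> / m"
    have "T (- r) \<le> t" "t \<le> T r" "- r \<le> r"
      using linear_lower[of "- r" 0] linear_lower[of 0 r] \<open>0 < m\<close>
      by (auto simp: r_def)
    then show ?thesis
      using IVT'[of T "- r" t r] cont by (auto intro: continuous_at_imp_continuous_on)
  qed
  define S where "S t = (THE s. T s = t)" for t
  have TS: "T (S t) = t" for t
    unfolding S_def by (rule theI') (use surj inj in blast)
  have ST: "S (T s) = s" for s
    using TS[of "T s"] inj by blast
  have "mono S"
    by (rule monoI) (metis TS strict linorder_not_le order.asym)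
  have "isCont S t" for t
    using isCont_inverse_function[where d=1 and x="S t" and f=T and g=S] ST TS cont by auto
  then have "(S has_real_derivative inverse (k (S t))) (at t)" for t
    using lower[of "S t"] \<open>0 < m\<close>
    by (intro DERIV_inverse_function[where f=T and a="t - 1" and b="t + 1"] deriv) (auto simp: TS)
  with TS ST \<open>mono S\<close> that show ?thesis by blast
qed

section \<open>The scalar equation \<open>X' = - F X\<close>\<close>

text \<open>Separation of variables after the substitution \<open>x = exp (- \<sigma>)\<close>, which turns the
  singular time integral \<open>\<integral> dx / F x\<close> over \<open>(0, 1]\<close> into the integral of a continuous
  function over the whole line.\<close>

lemma decay_ode_solution_exists:
  fixes F :: "real \<Rightarrow> real"
  assumes cont: "continuous_on {0<..1} F"
    and pos: "\<And>x. x \<in> {0<..1} \<Longrightarrow> 0 < F x"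
    and linear: "\<And>x. x \<in> {0<..1} \<Longrightarrow> F x \<le> M * x"
  obtains X where "X 0 = 1" "\<And>t. 0 \<le> t \<Longrightarrow> (X has_real_derivative - F (X t)) (at t)"
proof -
  define e where "e \<sigma> = exp (- max \<sigma> 0)" for \<sigma> :: real
  have e: "e \<sigma> \<in> {0<..1}" for \<sigma>
    unfolding e_def by auto
  have "0 < M"
    using pos[of 1] linear[of 1] by simp
  define k where "k \<sigma> = e \<sigma> / F (e \<sigma>)" for \<sigma>
  have k_lower: "1 / M \<le> k \<sigma>" for \<sigma>
    using linear[OF e] pos[OF e] e[of \<sigma>] \<open>0 < M\<close> by (simp add: k_def field_simps)
  have "continuous_on {0<..1} (\<lambda>x. x / F x)"
    using cont pos by (intro continuous_intros) (auto simp: less_imp_neq[symmetric])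
  then have "continuous_on UNIV k"
    unfolding k_def by (rule continuous_on_compose2) (auto simp: e_def intro!: continuous_intros)
  then obtain T0 where "\<And>x. (T0 has_vector_derivative k x) (at x)"
    using einterval_antiderivative[of "-\<infinity>" "\<infinity>" k] by (auto simp: continuous_on_eq_continuous_at)
  then have "(T0 has_real_derivative k x) (at x)" for x
    by (simp add: has_real_derivative_iff_has_vector_derivative)
  moreover have "0 < 1 / M"
    using \<open>0 < M\<close> by simp
  ultimately obtain S where ST: "\<And>s. S (T0 s) = s" and "mono S"
    and dS: "\<And>t. (S has_real_derivative inverse (k (S t))) (at t)"
    using DERIV_ge_pos_imp_inverse k_lower by metis
  have S_nonneg: "S (t + T0 0) \<ge> 0" if "0 \<le> t" for t
    using monoD[OF \<open>mono S\<close>, of "T0 0" "t + T0 0"] that ST[of 0] by simp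
  define X where "X t = exp (- S (t + T0 0))" for t
  show ?thesis
  proof
    show "X 0 = 1"
      by (simp add: X_def ST)
    fix t :: real assume "0 \<le> t"
    have "X t = e (S (t + T0 0))"
      using S_nonneg[OF \<open>0 \<le> t\<close>] by (simp add: X_def e_def)
    then have "X t > 0" "F (X t) > 0" "k (S (t + T0 0)) = X t / F (X t)"
      using pos e by (auto simp: k_def)
    moreover have "(X has_real_derivative X t * - inverse (k (S (t + T0 0)))) (at t)"
      unfolding X_def by (auto intro!: derivative_eq_intros DERIV_chain2[OF dS])
    ultimately show "(X has_real_derivative - F (X t)) (at t)"
      by simp
  qed
qed

lemma decay_ode_square_antimono:
  fixes X F :: "real \<Rightarrow> real"
  assumes deriv: "\<And>t. 0 \<le> t \<Longrightarrow> (X has_real_derivative - F (X t)) (at t within {0..})"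
    and sign: "\<And>x. 0 \<le> x * F x"
    and "0 \<le> a" "a \<le> b"
  shows "(X b)\<^sup>2 \<le> (X a)\<^sup>2"
proof (rule DERIV_within_nonpos_imp_nonincreasing[OF \<open>0 \<le> a\<close> \<open>a \<le> b\<close>])
  fix t assume "t \<in> {a..b}"
  then show "((\<lambda>t. (X t)\<^sup>2) has_real_derivative - 2 * (X t * F (X t))) (at t within {0..})"
    using \<open>0 \<le> a\<close> by (auto intro!: derivative_eq_intros deriv)
  show "- 2 * (X t * F (X t)) \<le> 0"
    using sign[of "X t"] by simp
qed

lemma decay_ode_bounds:
  fixes X F :: "real \<Rightarrow> real"
  assumes deriv: "\<And>t. 0 \<le> t \<Longrightarrow> (X has_real_derivative - F (X t)) (at t within {0..})"
    and sign: "\<And>x. 0 \<le> x * F x"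
    and "X 0 = 1" "0 \<le> t"
  shows "0 \<le> X t" "X t \<le> 1"
proof -
  have square: "(X b)\<^sup>2 \<le> (X a)\<^sup>2" if "0 \<le> a" "a \<le> b" for a b
    using decay_ode_square_antimono[OF deriv sign that] .
  show "X t \<le> 1"
    using square[of 0 t] \<open>X 0 = 1\<close> \<open>0 \<le> t\<close> abs_le_square_iff[of "X t" 1] by auto
  show "0 \<le> X t"
  proof (rule ccontr)
    assume "\<not> 0 \<le> X t"
    moreover have "continuous_on {0..t} X"
      using continuous_on_atLeast_if_DERIV_within[OF deriv] continuous_on_subset by fastforce
    ultimately obtain s where "0 \<le> s" "s \<le> t" "X s = 0"
      using IVT2'[of X t 0 0] \<open>X 0 = 1\<close> \<open>0 \<le> t\<close> by auto
    with square[of s t] \<open>\<not> 0 \<le> X t\<close> show False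
      by simp
  qed
qed

lemma decay_ode_cubic_rate:
  fixes X F :: "real \<Rightarrow> real"
  assumes deriv: "\<And>t. 0 \<le> t \<Longrightarrow> (X has_real_derivative - F (X t)) (at t within {0..})"
    and sign: "\<And>x. 0 \<le> x * F x"
    and cubic: "\<And>x. x \<in> {0..1} \<Longrightarrow> c * x ^ 3 \<le> F x"
    and "X 0 = 1" "0 \<le> t"
  shows "2 * c * t * (X t)\<^sup>2 \<le> 1"
proof (cases "X t = 0")
  case False
  have bounds: "0 \<le> X s" "X s \<le> 1" if "0 \<le> s" for s
    using decay_ode_bounds[OF deriv sign \<open>X 0 = 1\<close> that] by auto
  have pos: "0 < X s" if "s \<in> {0..t}" for s
    using decay_ode_square_antimono[OF deriv sign, of s t] bounds[of s] bounds[of t] False that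
    by (auto simp: order_le_less)
  define \<Psi> where "\<Psi> s = 2 * c * s - 1 / (X s)\<^sup>2" for s
  have "\<Psi> t \<le> \<Psi> 0"
  proof (rule DERIV_within_nonpos_imp_nonincreasing[OF order.refl \<open>0 \<le> t\<close>])
    fix s assume s: "s \<in> {0..t}"
    show "(\<Psi> has_real_derivative 2 * c - 2 * F (X s) / (X s) ^ 3) (at s within {0..})"
      unfolding \<Psi>_def using s pos[OF s]
      by (auto intro!: derivative_eq_intros deriv simp: field_simps power2_eq_square power3_eq_cube)
    have "c * X s ^ 3 \<le> F (X s)"
      using cubic bounds[of s] s by auto
    then show "2 * c - 2 * F (X s) / (X s) ^ 3 \<le> 0"
      using pos[OF s] by (simp add: field_simps)
  qed
  then have "2 * c * t - 1 / (X t)\<^sup>2 \<le> - 1"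
    using \<open>X 0 = 1\<close> by (simp add: \<Psi>_def)
  then have "(X t)\<^sup>2 + 2 * c * t * (X t)\<^sup>2 \<le> 1"
    using False by (simp add: field_simps)
  then show ?thesis
    using zero_le_power2[of "X t"] by linarith
qed simp

section \<open>Three particles on the line\<close>

abbreviation flow3 :: "(real \<Rightarrow> real) \<Rightarrow> (nat \<Rightarrow> real) \<Rightarrow> nat \<Rightarrow> real" where
  "flow3 \<beta> \<equiv> flow_rhs 3 (\<lambda>i j. 1/6) \<beta>"

definition log_deriv :: "(real \<Rightarrow> real) \<Rightarrow> real \<Rightarrow> real" where
  "log_deriv \<beta> r = deriv (\<lambda>x. ln (\<beta> x)) r"

definition kernel_sum :: "(real \<Rightarrow> real) \<Rightarrow> (nat \<Rightarrow> real) \<Rightarrow> real" where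
  "kernel_sum \<beta> y = \<beta> ((y 1 - y 2)\<^sup>2) + \<beta> ((y 1 - y 3)\<^sup>2) + \<beta> ((y 2 - y 3)\<^sup>2)"

lemma atLeastAtMost_1_3: "{1..3::nat} = {1, 2, 3}"
  by auto

lemma qsim_denominator_3:
  "(\<Sum>k\<in>{1..3::nat}. \<Sum>l\<in>{1..3} - {k}. \<beta> ((y k - y l)\<^sup>2)) = 2 * kernel_sum \<beta> y"
  unfolding atLeastAtMost_1_3 by (simp add: kernel_sum_def insert_Diff_if power2_commute)

lemma flow3_1:
  "flow3 \<beta> y 1 =
     4 * ((1/6 - \<beta> ((y 1 - y 2)\<^sup>2) / (2 * kernel_sum \<beta> y)) * (y 1 - y 2) * log_deriv \<beta> ((y 1 - y 2)\<^sup>2)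
        + (1/6 - \<beta> ((y 1 - y 3)\<^sup>2) / (2 * kernel_sum \<beta> y)) * (y 1 - y 3) * log_deriv \<beta> ((y 1 - y 3)\<^sup>2))"
  unfolding flow_rhs_def qsim_def qsim_denominator_3 log_deriv_def
  unfolding atLeastAtMost_1_3
  by (simp add: insert_Diff_if)

lemma flow3_2:
  "flow3 \<beta> y 2 =
     4 * ((1/6 - \<beta> ((y 1 - y 2)\<^sup>2) / (2 * kernel_sum \<beta> y)) * (y 2 - y 1) * log_deriv \<beta> ((y 1 - y 2)\<^sup>2)
        + (1/6 - \<beta> ((y 2 - y 3)\<^sup>2) / (2 * kernel_sum \<beta> y)) * (y 2 - y 3) * log_deriv \<beta> ((y 2 - y 3)\<^sup>2))"
  unfolding flow_rhs_def qsim_def qsim_denominator_3 log_deriv_def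
  unfolding atLeastAtMost_1_3
  by (simp add: insert_Diff_if power2_commute)

lemma flow3_3:
  "flow3 \<beta> y 3 =
     4 * ((1/6 - \<beta> ((y 1 - y 3)\<^sup>2) / (2 * kernel_sum \<beta> y)) * (y 3 - y 1) * log_deriv \<beta> ((y 1 - y 3)\<^sup>2)
        + (1/6 - \<beta> ((y 2 - y 3)\<^sup>2) / (2 * kernel_sum \<beta> y)) * (y 3 - y 2) * log_deriv \<beta> ((y 2 - y 3)\<^sup>2))"
  unfolding flow_rhs_def qsim_def qsim_denominator_3 log_deriv_def
  unfolding atLeastAtMost_1_3
  by (simp add: insert_Diff_if power2_commute)

lemma flow3_sum: "flow3 \<beta> y 1 + flow3 \<beta> y 2 + flow3 \<beta> y 3 = 0"
  unfolding flow3_1 flow3_2 flow3_3 unfolding divide_inverse by algebra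

lemma flow3_cong:
  assumes "y 1 = z 1" "y 2 = z 2" "y 3 = z 3"
  shows "flow3 \<beta> y 1 = flow3 \<beta> z 1"
  unfolding flow3_1 kernel_sum_def using assms by simp

definition sym_config :: "real \<Rightarrow> nat \<Rightarrow> real" where
  "sym_config X = (\<lambda>i. if i = 1 then X else if i = 3 then - X else 0)"

definition sym_drift :: "(real \<Rightarrow> real) \<Rightarrow> real \<Rightarrow> real" where
  "sym_drift \<beta> X = - flow3 \<beta> (sym_config X) 1"

lemma flow3_sym_config_2: "flow3 \<beta> (sym_config X) 2 = 0"
  unfolding flow3_2 by (simp add: sym_config_def algebra_simps)

lemma flow3_sym_config_3: "flow3 \<beta> (sym_config X) 3 = sym_drift \<beta> X"
  unfolding sym_drift_def flow3_1 flow3_3 by (simp add: sym_config_def algebra_simps)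

lemma sym_drift_eq:
  assumes "2 * \<beta> (X\<^sup>2) + \<beta> (4 * X\<^sup>2) \<noteq> 0"
  shows "sym_drift \<beta> X =
    - 4 * X * ((2 * \<beta> (X\<^sup>2) + \<beta> (4 * X\<^sup>2)) * (log_deriv \<beta> (X\<^sup>2) + 2 * log_deriv \<beta> (4 * X\<^sup>2))
      - 3 * (\<beta> (X\<^sup>2) * log_deriv \<beta> (X\<^sup>2) + 2 * \<beta> (4 * X\<^sup>2) * log_deriv \<beta> (4 * X\<^sup>2)))
    / (6 * (2 * \<beta> (X\<^sup>2) + \<beta> (4 * X\<^sup>2)))"
proof -
  have "(X - - X)\<^sup>2 = 4 * X\<^sup>2" "(0 - - X)\<^sup>2 = X\<^sup>2" "(X - 0)\<^sup>2 = X\<^sup>2" "X - - X = 2 * X"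
    by (simp_all add: power2_eq_square algebra_simps)
  then have expand: "sym_drift \<beta> X =
    - 4 * ((1/6 - \<beta> (X\<^sup>2) / (2 * (2 * \<beta> (X\<^sup>2) + \<beta> (4 * X\<^sup>2)))) * X * log_deriv \<beta> (X\<^sup>2)
      + (1/6 - \<beta> (4 * X\<^sup>2) / (2 * (2 * \<beta> (X\<^sup>2) + \<beta> (4 * X\<^sup>2)))) * (2 * X) * log_deriv \<beta> (4 * X\<^sup>2))"
    unfolding sym_drift_def flow3_1 kernel_sum_def by (simp add: sym_config_def algebra_simps)
  have "- 4 * ((1/6 - a / (2 * S)) * X * p + (1/6 - b / (2 * S)) * (2 * X) * q)
      = - 4 * X * (S * (p + 2 * q) - 3 * (a * p + 2 * b * q)) / (6 * S)" if "S \<noteq> 0" for S a b p q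
    using that by (simp add: field_simps)
  from this[OF assms] show ?thesis
    unfolding expand .
qed

lemma flow3_solution_centred:
  assumes sol: "is_flow_solution 3 (\<lambda>i j. 1/6) \<beta> Y"
    and "Y 0 1 + Y 0 2 + Y 0 3 = 0" "0 \<le> t"
  shows "Y t 1 + Y t 2 + Y t 3 = 0"
proof -
  have deriv: "((\<lambda>\<tau>. Y \<tau> i) has_real_derivative flow3 \<beta> (Y s) i) (at s within {0..})"
    if "s \<in> {0..}" "i \<in> {1, 2, 3}" for s i
    using sol that unfolding is_flow_solution_def atLeastAtMost_1_3 by auto
  have "((\<lambda>\<tau>. Y \<tau> 1 + Y \<tau> 2 + Y \<tau> 3) has_real_derivative 0) (at s within {0..})"
    if "s \<in> {0..}" for s
    using DERIV_add[OF DERIV_add[OF deriv deriv] deriv, of s 1 2 3] that flow3_sum[of \<beta> "Y s"]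
    by simp
  then have "\<exists>C. \<forall>s\<in>{0..}. Y s 1 + Y s 2 + Y s 3 = C"
    by (intro has_field_derivative_zero_constant) (auto simp: convex_real_interval)
  then obtain C where "\<forall>s\<in>{0..}. Y s 1 + Y s 2 + Y s 3 = C" ..
  with assms(2,3) show ?thesis
    by force
qed

text \<open>With \<open>u = y\<^sub>1 - y\<^sub>2\<close>, \<open>v = y\<^sub>2 - y\<^sub>3\<close> and \<open>y\<^sub>1 + y\<^sub>2 + y\<^sub>3 = 0\<close> we have \<open>v - u = 3 y\<^sub>2\<close>, so the
  velocity of the middle particle is a difference of Lipschitz terms at \<open>v\<close> and \<open>u\<close>.\<close>

lemma flow3_middle_estimate:
  assumes lip: "\<And>x y. \<bar>x * log_deriv \<beta> (x\<^sup>2) - y * log_deriv \<beta> (y\<^sup>2)\<bar> \<le> L * \<bar>x - y\<bar>"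
    and lip_weighted: "\<And>x y. \<bar>x * \<beta> (x\<^sup>2) * log_deriv \<beta> (x\<^sup>2) - y * \<beta> (y\<^sup>2) * log_deriv \<beta> (y\<^sup>2)\<bar>
      \<le> L * \<bar>x - y\<bar>"
    and "0 < kernel_sum \<beta> y" "y 1 + y 2 + y 3 = 0"
  shows "\<bar>flow3 \<beta> y 2\<bar> \<le> 12 * L * (1/6 + 1 / (2 * kernel_sum \<beta> y)) * \<bar>y 2\<bar>"
proof -
  define u where "u = y 1 - y 2"
  define v where "v = y 2 - y 3"
  define w where "w = 1 / (2 * kernel_sum \<beta> y)"
  define a where "a = v * log_deriv \<beta> (v\<^sup>2) - u * log_deriv \<beta> (u\<^sup>2)"
  define b where "b = v * \<beta> (v\<^sup>2) * log_deriv \<beta> (v\<^sup>2) - u * \<beta> (u\<^sup>2) * log_deriv \<beta> (u\<^sup>2)"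
  have flow: "flow3 \<beta> y 2 = 4 * (a / 6 - w * b)"
    using \<open>0 < kernel_sum \<beta> y\<close> unfolding flow3_2 a_def b_def w_def u_def v_def
    by (simp add: field_simps)
  have "v - u = 3 * y 2"
    using \<open>y 1 + y 2 + y 3 = 0\<close> by (simp add: u_def v_def)
  then have a: "\<bar>a\<bar> \<le> L * (3 * \<bar>y 2\<bar>)" and b: "\<bar>b\<bar> \<le> L * (3 * \<bar>y 2\<bar>)"
    using lip[of v u] lip_weighted[of v u] by (simp_all add: a_def b_def)
  have "0 \<le> w"
    using \<open>0 < kernel_sum \<beta> y\<close> by (simp add: w_def)
  have "\<bar>a / 6 - w * b\<bar> \<le> \<bar>a\<bar> / 6 + w * \<bar>b\<bar>"
    using abs_triangle_ineq4[of "a / 6" "w * b"] \<open>0 \<le> w\<close> by (simp add: abs_mult)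
  also have "\<dots> \<le> L * (3 * \<bar>y 2\<bar>) / 6 + w * (L * (3 * \<bar>y 2\<bar>))"
    using a mult_left_mono[OF b \<open>0 \<le> w\<close>] by simp
  finally have "\<bar>flow3 \<beta> y 2\<bar> \<le> 4 * (L * (3 * \<bar>y 2\<bar>) / 6 + w * (L * (3 * \<bar>y 2\<bar>)))"
    unfolding flow by (simp add: abs_mult)
  then show ?thesis
    by (simp add: w_def algebra_simps)
qed

lemma flow3_solution_symmetric:
  assumes pos: "\<And>x. 0 \<le> x \<Longrightarrow> 0 < \<beta> x" and cont: "continuous_on {0..} \<beta>"
    and lip: "\<And>x y. \<bar>x * log_deriv \<beta> (x\<^sup>2) - y * log_deriv \<beta> (y\<^sup>2)\<bar> \<le> L * \<bar>x - y\<bar>"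
    and lip_weighted: "\<And>x y. \<bar>x * \<beta> (x\<^sup>2) * log_deriv \<beta> (x\<^sup>2) - y * \<beta> (y\<^sup>2) * log_deriv \<beta> (y\<^sup>2)\<bar>
      \<le> L * \<bar>x - y\<bar>"
    and sol: "is_flow_solution 3 (\<lambda>i j. 1/6) \<beta> Y"
    and init: "Y 0 2 = 0" "Y 0 3 = - Y 0 1"
    and "0 \<le> t"
  shows "Y t 2 = 0" "Y t 3 = - Y t 1"
proof -
  have centred: "Y s 1 + Y s 2 + Y s 3 = 0" if "0 \<le> s" for s
    using flow3_solution_centred[OF sol _ that] init by simp
  have deriv: "((\<lambda>\<tau>. Y \<tau> i) has_real_derivative flow3 \<beta> (Y s) i) (at s within {0..})"
    if "0 \<le> s" "i \<in> {1, 2, 3}" for s i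
    using sol that unfolding is_flow_solution_def atLeastAtMost_1_3 by auto
  have kernel_sum_pos: "0 < kernel_sum \<beta> y" for y
    using pos by (simp add: kernel_sum_def add_pos_pos)
  have "continuous_on {0..t} (\<lambda>s. Y s i)" if "i \<in> {1, 2, 3}" for i
    using continuous_on_atLeast_if_DERIV_within[OF deriv[OF _ that]] continuous_on_subset by fastforce
  then have "continuous_on {0..t} (\<lambda>s. kernel_sum \<beta> (Y s))"
    unfolding kernel_sum_def
    by (intro continuous_intros continuous_on_compose2[OF cont]) auto
  then obtain s0 where "\<And>s. s \<in> {0..t} \<Longrightarrow> kernel_sum \<beta> (Y s0) \<le> kernel_sum \<beta> (Y s)"
    using continuous_attains_inf[of "{0..t}"] \<open>0 \<le> t\<close> by fastforce
  then have inv_bound: "1 / (2 * kernel_sum \<beta> (Y s)) \<le> 1 / (2 * kernel_sum \<beta> (Y s0))"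
    if "s \<in> {0..t}" for s
    using that kernel_sum_pos by (simp add: frac_le)
  have "0 \<le> L"
    using lip[of 1 0] by simp
  define K where "K = 12 * L * (1/6 + 1 / (2 * kernel_sum \<beta> (Y s0)))"
  have "\<bar>flow3 \<beta> (Y s) 2\<bar> \<le> K * \<bar>Y s 2\<bar>" if "s \<in> {0..t}" for s
  proof -
    have "\<bar>flow3 \<beta> (Y s) 2\<bar> \<le> 12 * L * (1/6 + 1 / (2 * kernel_sum \<beta> (Y s))) * \<bar>Y s 2\<bar>"
      using flow3_middle_estimate[OF lip lip_weighted kernel_sum_pos centred[of s]] that by simp
    also have "\<dots> \<le> K * \<bar>Y s 2\<bar>"
      unfolding K_def using inv_bound[OF that] \<open>0 \<le> L\<close>
      by (intro mult_right_mono mult_left_mono add_left_mono) auto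
    finally show ?thesis .
  qed
  then show "Y t 2 = 0"
    using zero_if_DERIV_within_bounded_by_self[of t "\<lambda>s. Y s 2" "\<lambda>s. flow3 \<beta> (Y s) 2" K]
      deriv init \<open>0 \<le> t\<close> by auto
  then show "Y t 3 = - Y t 1"
    using centred[OF \<open>0 \<le> t\<close>] by simp
qed

lemma diam_3_symmetric:
  assumes "y 1 = X" "y 2 = 0" "y 3 = - X" "0 \<le> X"
  shows "diam 3 y = 2 * X"
proof -
  have "{\<bar>y i - y j\<bar> | i j. i \<in> {1..3::nat} \<and> j \<in> {1..3}}
      = (\<lambda>(i, j). \<bar>y i - y j\<bar>) ` ({1, 2, 3} \<times> {1, 2, 3})"
    unfolding atLeastAtMost_1_3 by force
  also have "\<dots> = {0, X, 2 * X}"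
    using assms by auto
  finally show ?thesis
    using assms by (simp add: diam_def)
qed

section \<open>Admissible kernels\<close>

locale sne_kernel =
  fixes \<beta> :: "real \<Rightarrow> real" and L c M :: real
  assumes kernel_pos: "\<And>x. 0 \<le> x \<Longrightarrow> 0 < \<beta> x"
    and kernel_continuous: "continuous_on {0..} \<beta>"
    and lipschitz_log_deriv:
      "\<And>x y. \<bar>x * log_deriv \<beta> (x\<^sup>2) - y * log_deriv \<beta> (y\<^sup>2)\<bar> \<le> L * \<bar>x - y\<bar>"
    and lipschitz_weighted_log_deriv:
      "\<And>x y. \<bar>x * \<beta> (x\<^sup>2) * log_deriv \<beta> (x\<^sup>2) - y * \<beta> (y\<^sup>2) * log_deriv \<beta> (y\<^sup>2)\<bar> \<le> L * \<bar>x - y\<bar>"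
    and sym_drift_sign: "\<And>x. 0 \<le> x * sym_drift \<beta> x"
    and sym_drift_cubic: "\<And>x. x \<in> {0..1} \<Longrightarrow> c * x ^ 3 \<le> sym_drift \<beta> x"
    and c_pos: "0 < c"
    and sym_drift_continuous: "continuous_on {0<..1} (sym_drift \<beta>)"
    and sym_drift_pos: "\<And>x. x \<in> {0<..1} \<Longrightarrow> 0 < sym_drift \<beta> x"
    and sym_drift_linear: "\<And>x. x \<in> {0<..1} \<Longrightarrow> sym_drift \<beta> x \<le> M * x"
begin

lemma flow_solution_exists:
  "\<exists>Y. is_flow_solution 3 (\<lambda>i j. 1/6) \<beta> Y \<and> Y 0 1 = 1 \<and> Y 0 2 = 0 \<and> Y 0 3 = -1"
proof -
  obtain X where "X 0 = 1" and deriv: "\<And>t. 0 \<le> t \<Longrightarrow> (X has_real_derivative - sym_drift \<beta> (X t)) (at t)"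
    using decay_ode_solution_exists[OF sym_drift_continuous sym_drift_pos sym_drift_linear] by metis
  have "is_flow_solution 3 (\<lambda>i j. 1/6) \<beta> (\<lambda>t. sym_config (X t))"
    unfolding is_flow_solution_def atLeastAtMost_1_3
  proof (intro allI impI ballI)
    fix t :: real and i :: nat assume "0 \<le> t" "i \<in> {1, 2, 3}"
    then consider "i = 1" | "i = 2" | "i = 3"
      by auto
    then have "((\<lambda>\<tau>. sym_config (X \<tau>) i) has_real_derivative flow3 \<beta> (sym_config (X t)) i) (at t)"
    proof cases
      case 1
      then show ?thesis
        using deriv[OF \<open>0 \<le> t\<close>] by (simp add: sym_config_def sym_drift_def)
    next
      case 2
      then show ?thesis
        by (simp only: flow3_sym_config_2) (simp add: sym_config_def)
    next
      case 3
      then show ?thesis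
        using DERIV_minus[OF deriv[OF \<open>0 \<le> t\<close>]]
        by (simp only: flow3_sym_config_3) (simp add: sym_config_def)
    qed
    then show "((\<lambda>\<tau>. sym_config (X \<tau>) i) has_real_derivative flow3 \<beta> (sym_config (X t)) i)
        (at t within {0..})"
      by (rule has_field_derivative_at_within)
  qed
  with \<open>X 0 = 1\<close> show ?thesis
    by (intro exI[of _ "\<lambda>t. sym_config (X t)"]) (simp add: sym_config_def)
qed

lemma flow_solution_reduces:
  assumes sol: "is_flow_solution 3 (\<lambda>i j. 1/6) \<beta> Y"
    and init: "Y 0 1 = 1" "Y 0 2 = 0" "Y 0 3 = -1" and "0 \<le> t"
  shows "Y t 2 = 0" "Y t 3 = - Y t 1" "0 \<le> Y t 1" "Y t 1 \<le> 1" "2 * c * t * (Y t 1)\<^sup>2 \<le> 1"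
proof -
  have symmetric: "Y s 2 = 0" "Y s 3 = - Y s 1" if "0 \<le> s" for s
    using flow3_solution_symmetric[OF kernel_pos kernel_continuous lipschitz_log_deriv
        lipschitz_weighted_log_deriv sol _ _ that] init by simp_all
  have deriv: "((\<lambda>s. Y s 1) has_real_derivative - sym_drift \<beta> (Y s 1)) (at s within {0..})"
    if "0 \<le> s" for s
  proof -
    have "flow3 \<beta> (Y s) 1 = flow3 \<beta> (sym_config (Y s 1)) 1"
      by (rule flow3_cong) (simp_all add: sym_config_def symmetric[OF that])
    moreover have "((\<lambda>s. Y s 1) has_real_derivative flow3 \<beta> (Y s) 1) (at s within {0..})"
      using sol that unfolding is_flow_solution_def by simp
    ultimately show ?thesis
      by (simp add: sym_drift_def)
  qed
  show "Y t 2 = 0" "Y t 3 = - Y t 1"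
    using symmetric[OF \<open>0 \<le> t\<close>] .
  show "0 \<le> Y t 1" "Y t 1 \<le> 1"
    using decay_ode_bounds[OF deriv sym_drift_sign] init \<open>0 \<le> t\<close> by auto
  show "2 * c * t * (Y t 1)\<^sup>2 \<le> 1"
    using decay_ode_cubic_rate[OF deriv sym_drift_sign sym_drift_cubic] init \<open>0 \<le> t\<close> by auto
qed

lemma flow_solution_diam:
  assumes sol: "is_flow_solution 3 (\<lambda>i j. 1/6) \<beta> Y"
    and init: "Y 0 1 = 1" "Y 0 2 = 0" "Y 0 3 = -1" and "0 \<le> t"
  shows "diam 3 (Y t) = 2 * Y t 1"
  using flow_solution_reduces[OF sol init \<open>0 \<le> t\<close>] by (intro diam_3_symmetric) auto

lemma flow_solution_diam_bound:
  assumes sol: "is_flow_solution 3 (\<lambda>i j. 1/6) \<beta> Y"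
    and init: "Y 0 1 = 1" "Y 0 2 = 0" "Y 0 3 = -1" and "0 < t"
  shows "diam 3 (Y t) \<le> 2 / sqrt (2 * c) * t powr (-1/2)"
proof -
  have "(2 * Y t 1)\<^sup>2 \<le> (2 / sqrt (2 * c) * (1 / sqrt t))\<^sup>2"
    using flow_solution_reduces(5)[OF sol init, of t] \<open>0 < t\<close> c_pos
    by (simp add: field_simps power2_eq_square real_sqrt_mult)
  then have "2 * Y t 1 \<le> 2 / sqrt (2 * c) * (1 / sqrt t)"
    by (rule power2_le_imp_le) (use c_pos \<open>0 < t\<close> in simp)
  then show ?thesis
    using flow_solution_diam[OF sol init, of t] \<open>0 < t\<close> by (simp add: powr_minus_divide powr_half_sqrt)
qed

lemma flow_solution_diam_tendsto_zero:
  assumes sol: "is_flow_solution 3 (\<lambda>i j. 1/6) \<beta> Y"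
    and init: "Y 0 1 = 1" "Y 0 2 = 0" "Y 0 3 = -1"
  shows "((\<lambda>t. diam 3 (Y t)) \<longlongrightarrow> 0) at_top"
proof (rule tendsto_sandwich[of "\<lambda>_. 0" _ _ "\<lambda>t. 2 / sqrt (2 * c) * t powr (-1/2)"])
  show "\<forall>\<^sub>F t in at_top. 0 \<le> diam 3 (Y t)"
    using eventually_ge_at_top[of 0]
  proof eventually_elim
    case (elim t)
    then show ?case
      using flow_solution_diam[OF sol init elim] flow_solution_reduces(3)[OF sol init elim] by simp
  qed
  show "\<forall>\<^sub>F t in at_top. diam 3 (Y t) \<le> 2 / sqrt (2 * c) * t powr (-1/2)"
    using eventually_gt_at_top[of 0] by eventually_elim (rule flow_solution_diam_bound[OF sol init])
  show "((\<lambda>t. 2 / sqrt (2 * c) * t powr (-1/2)) \<longlongrightarrow> 0) at_top"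
    by (rule tendsto_mult_right_zero) (rule tendsto_neg_powr, simp, rule filterlim_ident)
qed simp

end

section \<open>The Cauchy and Gaussian kernels\<close>

definition cauchy_kernel :: "real \<Rightarrow> real" where
  "cauchy_kernel = (\<lambda>x. 1 / (1 + x))"

definition gaussian_kernel :: "real \<Rightarrow> real" where
  "gaussian_kernel = (\<lambda>x. exp (- x))"

lemma log_deriv_cauchy_kernel:
  assumes "0 \<le> r" shows "log_deriv cauchy_kernel r = - 1 / (1 + r)"
proof -
  have "1 + (r * r + r * 2) \<noteq> 0"
    using assms by (smt (verit) mult_nonneg_nonneg)
  then show ?thesis
    unfolding log_deriv_def cauchy_kernel_def
    by (intro DERIV_imp_deriv)
      (use assms in \<open>auto intro!: derivative_eq_intros simp: field_simps power2_eq_square\<close>)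
qed

lemma log_deriv_gaussian_kernel: "log_deriv gaussian_kernel r = - 1"
  unfolding log_deriv_def gaussian_kernel_def by simp

lemma sym_drift_cauchy_kernel:
  "sym_drift cauchy_kernel X = 2 * X ^ 3 / ((1 + X\<^sup>2) * (1 + 3 * X\<^sup>2) * (1 + 4 * X\<^sup>2))"
proof -
  define p q r where "p = 1 + X\<^sup>2" and "q = 1 + 4 * X\<^sup>2" and "r = 1 + 3 * X\<^sup>2"
  have pos: "0 < p" "0 < q" "0 < r"
    by (simp_all add: p_def q_def r_def add_pos_nonneg)
  have kernels: "cauchy_kernel (X\<^sup>2) = 1 / p" "cauchy_kernel (4 * X\<^sup>2) = 1 / q"
    by (simp_all add: cauchy_kernel_def p_def q_def add.commute)
  have log_derivs: "log_deriv cauchy_kernel (X\<^sup>2) = - 1 / p" "log_deriv cauchy_kernel (4 * X\<^sup>2) = - 1 / q"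
    by (simp_all add: log_deriv_cauchy_kernel p_def q_def)
  have nonzero: "2 * cauchy_kernel (X\<^sup>2) + cauchy_kernel (4 * X\<^sup>2) \<noteq> 0"
    unfolding kernels using pos by (simp add: add_pos_pos order_less_imp_not_eq2)
  have sum: "2 * (1 / p) + 1 / q = 3 * r / (p * q)"
    using pos by (simp add: p_def q_def r_def field_simps)
  show ?thesis
    unfolding sym_drift_eq[OF nonzero] kernels log_derivs sum
    unfolding p_def[symmetric] q_def[symmetric] r_def[symmetric]
    using pos by (simp add: field_simps) (use p_def q_def r_def in algebra)
qed

lemma sym_drift_gaussian_kernel:
  "sym_drift gaussian_kernel X = 2 * X * (1 - exp (- (3 * X\<^sup>2))) / (2 + exp (- (3 * X\<^sup>2)))"
proof -
  define a e where "a = exp (- X\<^sup>2)" and "e = exp (- (3 * X\<^sup>2))"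
  have pos: "0 < a" "0 < e"
    by (simp_all add: a_def e_def)
  have kernels: "gaussian_kernel (X\<^sup>2) = a" "gaussian_kernel (4 * X\<^sup>2) = a * e"
    by (simp_all add: gaussian_kernel_def a_def e_def flip: exp_add)
  have nonzero: "2 * gaussian_kernel (X\<^sup>2) + gaussian_kernel (4 * X\<^sup>2) \<noteq> 0"
    unfolding kernels using pos by (simp add: add_pos_pos order_less_imp_not_eq2)
  have "sym_drift gaussian_kernel X = (6 * a) * (2 * X * (1 - e)) / ((6 * a) * (2 + e))"
    unfolding sym_drift_eq[OF nonzero] kernels log_deriv_gaussian_kernel by (simp add: algebra_simps)
  also have "\<dots> = 2 * X * (1 - e) / (2 + e)"
    using pos by (intro mult_divide_mult_cancel_left) simp
  finally show ?thesis
    by (simp add: e_def)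
qed

lemma sne_kernel_cauchy_kernel: "sne_kernel cauchy_kernel 3 (1/20) 2"
proof
  show "0 < cauchy_kernel x" if "0 \<le> x" for x
    using that by (simp add: cauchy_kernel_def)
  show "continuous_on {0..} cauchy_kernel"
    unfolding cauchy_kernel_def by (intro continuous_intros) auto
  have positive: "0 < 1 + z\<^sup>2" for z :: real
    by (simp add: add_pos_nonneg)
  then have nonzero: "1 + z\<^sup>2 \<noteq> 0" for z :: real
    by (metis order_less_irrefl)
  show "\<bar>x * log_deriv cauchy_kernel (x\<^sup>2) - y * log_deriv cauchy_kernel (y\<^sup>2)\<bar> \<le> 3 * \<bar>x - y\<bar>" for x y
  proof -
    have deriv: "((\<lambda>z. - z / (1 + z\<^sup>2)) has_real_derivative (z\<^sup>2 - 1) / (1 + z\<^sup>2)\<^sup>2) (at z)" for z :: real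
      using nonzero[of z] by (auto intro!: derivative_eq_intros simp: divide_simps power2_eq_square)
    have bound: "\<bar>(z\<^sup>2 - 1) / (1 + z\<^sup>2)\<^sup>2\<bar> \<le> 3" for z :: real
    proof -
      have "\<bar>z\<^sup>2 - 1\<bar> \<le> 1 + z\<^sup>2"
        by (simp add: abs_le_iff)
      also have "\<dots> \<le> (1 + z\<^sup>2)\<^sup>2"
        using power_increasing[of 1 2 "1 + z\<^sup>2"] by simp
      finally have "\<bar>z\<^sup>2 - 1\<bar> \<le> 3 * (1 + z\<^sup>2)\<^sup>2"
        by simp
      then show ?thesis
        using positive[of z] by (simp add: abs_divide divide_le_eq)
    qed
    show ?thesis
      using lipschitz_if_DERIV_bounded[OF deriv bound, of x y] by (simp add: log_deriv_cauchy_kernel)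
  qed
  show "\<bar>x * cauchy_kernel (x\<^sup>2) * log_deriv cauchy_kernel (x\<^sup>2)
      - y * cauchy_kernel (y\<^sup>2) * log_deriv cauchy_kernel (y\<^sup>2)\<bar> \<le> 3 * \<bar>x - y\<bar>" for x y
  proof -
    have deriv: "((\<lambda>z. - z / (1 + z\<^sup>2)\<^sup>2) has_real_derivative (3 * z\<^sup>2 - 1) / (1 + z\<^sup>2) ^ 3) (at z)" for z :: real
      using nonzero[of z]
      by (auto intro!: derivative_eq_intros simp: divide_simps power2_eq_square power3_eq_cube)
        (simp add: algebra_simps)
    have bound: "\<bar>(3 * z\<^sup>2 - 1) / (1 + z\<^sup>2) ^ 3\<bar> \<le> 3" for z :: real
    proof -
      have "\<bar>3 * z\<^sup>2 - 1\<bar> \<le> 3 * (1 + z\<^sup>2)"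
        by (simp add: abs_le_iff)
      also have "\<dots> \<le> 3 * (1 + z\<^sup>2) ^ 3"
        using power_increasing[of 1 3 "1 + z\<^sup>2"] by simp
      finally have "\<bar>3 * z\<^sup>2 - 1\<bar> \<le> 3 * (1 + z\<^sup>2) ^ 3" .
      then show ?thesis
        using positive[of z] by (simp add: abs_divide divide_le_eq)
    qed
    have "z * cauchy_kernel (z\<^sup>2) * log_deriv cauchy_kernel (z\<^sup>2) = - z / (1 + z\<^sup>2)\<^sup>2" for z :: real
      by (simp add: log_deriv_cauchy_kernel) (simp add: cauchy_kernel_def power2_eq_square)
    then show ?thesis
      using lipschitz_if_DERIV_bounded[OF deriv bound, of x y] by simp
  qed
  have denominator_pos: "0 < (1 + X\<^sup>2) * (1 + 3 * X\<^sup>2) * (1 + 4 * X\<^sup>2)" for X :: real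
    by (intro mult_pos_pos) (simp_all add: add_pos_nonneg)
  show "0 \<le> X * sym_drift cauchy_kernel X" for X
  proof -
    have "X * sym_drift cauchy_kernel X = 2 * (X\<^sup>2)\<^sup>2 / ((1 + X\<^sup>2) * (1 + 3 * X\<^sup>2) * (1 + 4 * X\<^sup>2))"
      by (simp add: sym_drift_cauchy_kernel power2_eq_square power3_eq_cube)
    then show ?thesis
      using denominator_pos[of X] by simp
  qed
  show "1/20 * X ^ 3 \<le> sym_drift cauchy_kernel X" if "X \<in> {0..1}" for X
  proof -
    have "X\<^sup>2 \<le> 1"
      using that by (simp add: power_le_one)
    then have "(1 + X\<^sup>2) * (1 + 3 * X\<^sup>2) * (1 + 4 * X\<^sup>2) \<le> 2 * 4 * 5"
      by (intro mult_mono) (auto simp: add_nonneg_nonneg)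
    then show ?thesis
      unfolding sym_drift_cauchy_kernel
      using that denominator_pos[of X] divide_left_mono[of _ _ "2 * X ^ 3"] by fastforce
  qed
  show "(0::real) < 1/20"
    by simp
  show "continuous_on {0<..1} (sym_drift cauchy_kernel)"
    unfolding sym_drift_cauchy_kernel[abs_def]
    by (intro continuous_intros) (auto simp: add_nonneg_eq_0_iff)
  show "0 < sym_drift cauchy_kernel x" if "x \<in> {0<..1}" for x
    using that denominator_pos[of x] by (simp add: sym_drift_cauchy_kernel)
  show "sym_drift cauchy_kernel x \<le> 2 * x" if "x \<in> {0<..1}" for x
  proof -
    have "x ^ 3 \<le> x ^ 1"
      using that by (intro power_decreasing) auto
    also have "\<dots> \<le> x * ((1 + x\<^sup>2) * (1 + 3 * x\<^sup>2) * (1 + 4 * x\<^sup>2))"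
      using that mult_left_mono[of 1 "(1 + x\<^sup>2) * (1 + 3 * x\<^sup>2) * (1 + 4 * x\<^sup>2)" x]
      by (simp add: algebra_simps)
    finally show ?thesis
      using denominator_pos[of x] unfolding sym_drift_cauchy_kernel by (simp add: divide_le_eq)  qed
qed

lemma sne_kernel_gaussian_kernel: "sne_kernel gaussian_kernel 3 (1/2) 1"
proof
  show "0 < gaussian_kernel x" for x
    by (simp add: gaussian_kernel_def)
  show "continuous_on {0..} gaussian_kernel"
    unfolding gaussian_kernel_def by (intro continuous_intros)
  show "\<bar>x * log_deriv gaussian_kernel (x\<^sup>2) - y * log_deriv gaussian_kernel (y\<^sup>2)\<bar> \<le> 3 * \<bar>x - y\<bar>" for x y
    by (simp add: log_deriv_gaussian_kernel abs_minus_commute)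
  show "\<bar>x * gaussian_kernel (x\<^sup>2) * log_deriv gaussian_kernel (x\<^sup>2)
      - y * gaussian_kernel (y\<^sup>2) * log_deriv gaussian_kernel (y\<^sup>2)\<bar> \<le> 3 * \<bar>x - y\<bar>" for x y
  proof -
    have deriv: "((\<lambda>z. - (z * exp (- z\<^sup>2))) has_real_derivative (2 * z\<^sup>2 - 1) * exp (- z\<^sup>2)) (at z)"
      for z :: real
      by (auto intro!: derivative_eq_intros simp: algebra_simps power2_eq_square)
    have bound: "\<bar>(2 * z\<^sup>2 - 1) * exp (- z\<^sup>2)\<bar> \<le> 3" for z :: real
    proof -
      have "\<bar>2 * z\<^sup>2 - 1\<bar> \<le> 3 * (1 + z\<^sup>2)"
        by (simp add: abs_le_iff)
      also have "\<dots> \<le> 3 * exp (z\<^sup>2)"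
        by (intro mult_left_mono exp_ge_add_one_self) simp
      finally show ?thesis
        by (simp add: abs_mult exp_minus field_simps)
    qed
    show ?thesis
      using lipschitz_if_DERIV_bounded[OF deriv bound, of x y]
      by (simp add: log_deriv_gaussian_kernel) (simp add: gaussian_kernel_def abs_minus_commute)
  qed
  have e_bounds: "0 < exp (- (3 * X\<^sup>2))" "exp (- (3 * X\<^sup>2)) \<le> 1" for X :: real
    by simp_all
  show "0 \<le> X * sym_drift gaussian_kernel X" for X
    using e_bounds[of X]
    by (simp add: sym_drift_gaussian_kernel power2_eq_square mult.assoc[symmetric])
  show "1/2 * X ^ 3 \<le> sym_drift gaussian_kernel X" if X: "X \<in> {0..1}" for X
  proof -
    define e where "e = exp (- (3 * X\<^sup>2))"
    have "e \<le> 1 / (1 + 3 * X\<^sup>2)"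
      unfolding e_def exp_minus using exp_ge_add_one_self[of "3 * X\<^sup>2"]
      by (simp add: divide_simps add_pos_nonneg)
    also have "\<dots> \<le> 1 - 3 * X\<^sup>2 / 4"
    proof -
      have "0 \<le> X\<^sup>2 * (1 - X\<^sup>2)"
        using X by (simp add: power_le_one)
      then have "1 \<le> (1 - 3 * X\<^sup>2 / 4) * (1 + 3 * X\<^sup>2)"
        by (simp add: algebra_simps power2_eq_square)
      then show ?thesis
        by (simp add: divide_simps add_pos_nonneg)
    qed
    finally have "3 * X\<^sup>2 / 4 \<le> 1 - e"
      by simp
    then have "1/2 * X ^ 3 \<le> 2 * X * (1 - e) / 3"
      using mult_left_mono[of "3 * X\<^sup>2 / 4" "1 - e" "2 * X"] X
      by (simp add: power2_eq_square power3_eq_cube field_simps)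
    also have "\<dots> \<le> 2 * X * (1 - e) / (2 + e)"
      using X e_bounds[of X] by (intro divide_left_mono) (auto simp: e_def add_pos_pos)
    finally show ?thesis
      by (simp add: sym_drift_gaussian_kernel e_def)
  qed
  show "(0::real) < 1/2"
    by simp
  show "continuous_on {0<..1} (sym_drift gaussian_kernel)"
    unfolding sym_drift_gaussian_kernel[abs_def] using e_bounds
    by (intro continuous_intros) (auto simp: add_pos_pos order_less_imp_not_eq2)
  show "0 < sym_drift gaussian_kernel x" if "x \<in> {0<..1}" for x
  proof -
    have "exp (- (3 * x\<^sup>2)) < 1"
      using that by simp
    then show ?thesis
      using that e_bounds[of x] by (simp add: sym_drift_gaussian_kernel add_pos_pos)
  qed
  show "sym_drift gaussian_kernel x \<le> 1 * x" if "x \<in> {0<..1}" for x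
  proof -
    have "2 * (1 - exp (- (3 * x\<^sup>2))) \<le> 2 + exp (- (3 * x\<^sup>2))"
      by simp
    with that e_bounds[of x] show ?thesis
      by (simp add: sym_drift_gaussian_kernel divide_simps mult_left_mono add_pos_pos)
  qed
qed

theorem mainTheorem6:
  fixes \<beta> :: "real \<Rightarrow> real"
  assumes "\<beta> = (\<lambda>x. 1 / (1 + x)) \<or> \<beta> = (\<lambda>x. exp (- x))"
  shows "(\<exists>Y. is_flow_solution 3 (\<lambda>i j. 1/6) \<beta> Y \<and> Y 0 1 = 1 \<and> Y 0 2 = 0 \<and> Y 0 3 = -1)
    \<and> (\<forall>Y. is_flow_solution 3 (\<lambda>i j. 1/6) \<beta> Y \<and> Y 0 1 = 1 \<and> Y 0 2 = 0 \<and> Y 0 3 = -1 \<longrightarrow>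
          (\<exists>X :: real \<Rightarrow> real. \<forall>t\<ge>0. Y t 1 = X t \<and> Y t 2 = 0 \<and> Y t 3 = - X t
                                      \<and> 0 \<le> X t \<and> X t \<le> 1)
        \<and> (\<exists>C. \<forall>t>0. diam 3 (Y t) \<le> C * t powr (-1/2))
        \<and> ((\<lambda>t. diam 3 (Y t)) \<longlongrightarrow> 0) at_top)"
proof -
  from assms have "\<beta> = cauchy_kernel \<or> \<beta> = gaussian_kernel"
    unfolding cauchy_kernel_def gaussian_kernel_def .
  then obtain L c M where "sne_kernel \<beta> L c M"
    using sne_kernel_cauchy_kernel sne_kernel_gaussian_kernel by blast
  then interpret sne_kernel \<beta> L c M .
  have "(\<exists>X :: real \<Rightarrow> real. \<forall>t\<ge>0. Y t 1 = X t \<and> Y t 2 = 0 \<and> Y t 3 = - X t \<and> 0 \<le> X t \<and> X t \<le> 1)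
      \<and> (\<exists>C. \<forall>t>0. diam 3 (Y t) \<le> C * t powr (-1/2))
      \<and> ((\<lambda>t. diam 3 (Y t)) \<longlongrightarrow> 0) at_top"
    if sol: "is_flow_solution 3 (\<lambda>i j. 1/6) \<beta> Y" and init: "Y 0 1 = 1" "Y 0 2 = 0" "Y 0 3 = -1" for Y
  proof (intro conjI)
    show "\<exists>X. \<forall>t\<ge>0. Y t 1 = X t \<and> Y t 2 = 0 \<and> Y t 3 = - X t \<and> 0 \<le> X t \<and> X t \<le> 1"
      using flow_solution_reduces[OF sol init] by (intro exI[of _ "\<lambda>t. Y t 1"]) simp
    show "\<exists>C. \<forall>t>0. diam 3 (Y t) \<le> C * t powr (-1/2)"
      using flow_solution_diam_bound[OF sol init] by blast
    show "((\<lambda>t. diam 3 (Y t)) \<longlongrightarrow> 0) at_top"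
      by (rule flow_solution_diam_tendsto_zero[OF sol init])
  qed
  with flow_solution_exists show ?thesis
    by blast
qed

end
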